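(* Let $\mathbb{K}$ be an $\aleph_0$-complete field. Let $x=(x_1,\ldots,x_n)$, $Y=(Y_1,\ldots,Y_m)$, $f=(f_1,\ldots,f_r)\in\mathbb{K}[\![x]\!][Y]^r$ and $J_i\subset\{1,\ldots,n\}$ for $i=1,\ldots,m$. Then there exists a map $\nu:\mathbb{N}^m\to\mathbb{N}$ such that: if $c=(c_1,\ldots,c_m)\in\mathbb{N}^m$ and $y'=(y'_1,\ldots,y'_m)$ with $y'_i\in\mathbb{K}[\![x_{J_i}]\!]$ for $i=1,\ldots,m$ satisfies $f(y')\equiv 0$ modulo $(x)^{\nu(c)}$ and $\mathrm{ord}(y'_i)=c_i$ for $i=1,\ldots,m$, then there exist $y_i\in\mathbb{K}[\![x_{J_i}]\!]$, $i=1,\ldots,m$, such that $y=(y_1,\ldots,y_m)$ satisfies $f(y)=0$ and $\mathrm{ord}(y_i)=c_i$ for all $i=1,\ldots,m$.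
   Context: A field $\mathbb{K}$ is called $\aleph_0$-complete if every countable system $\mathcal S$ of polynomial equations with coefficients in $\mathbb{K}$ (in a countable number of indeterminates) has a solution in $\mathbb{K}$ if and only if every finite sub-system of $\mathcal S$ has a solution in $\mathbb{K}$. For $J\subset\{1,\ldots,n\}$, $\mathbb{K}[\![x_J]\!]$ denotes the subring of $\mathbb{K}[\![x]\!]$ of formal power series in the variables $x_j$, $j\in J$ only. $(x)$ is the maximal ideal of $\mathbb{K}[\![x]\!]$. For a power series $g$, $\mathrm{ord}(g)$ is the smallest total degree of a monomial appearing in $g$ with nonzero coefficient. *)

theory Defs
  imports Main "HOL-Library.Extended_Nat"
begin

text \<open>A polynomial over 'a in the indeterminates z_0, z_1, ... is a coefficient
function on exponent vectors (nat => nat); it is well-formed if it has finitely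
many nonzero coefficients, each at a finitely supported exponent vector.\<close>

definition cpoly_wf :: "((nat \<Rightarrow> nat) \<Rightarrow> 'a::zero) \<Rightarrow> bool" where
  "cpoly_wf p \<longleftrightarrow> finite {\<alpha>. p \<alpha> \<noteq> 0} \<and> (\<forall>\<alpha>. p \<alpha> \<noteq> 0 \<longrightarrow> finite {i. \<alpha> i \<noteq> 0})"

definition cpoly_eval :: "((nat \<Rightarrow> nat) \<Rightarrow> 'a::comm_ring_1) \<Rightarrow> (nat \<Rightarrow> 'a) \<Rightarrow> 'a" where
  "cpoly_eval p z = (\<Sum>\<alpha>\<in>{\<alpha>. p \<alpha> \<noteq> 0}. p \<alpha> * (\<Prod>i\<in>{i. \<alpha> i \<noteq> 0}. z i ^ \<alpha> i))"

definition aleph0_complete :: "'a::field itself \<Rightarrow> bool" where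
  "aleph0_complete _ \<longleftrightarrow>
     (\<forall>S :: ((nat \<Rightarrow> nat) \<Rightarrow> 'a) set. countable S \<and> (\<forall>p\<in>S. cpoly_wf p) \<longrightarrow>
        ((\<exists>z. \<forall>p\<in>S. cpoly_eval p z = 0) \<longleftrightarrow>
         (\<forall>F. F \<subseteq> S \<and> finite F \<longrightarrow> (\<exists>z. \<forall>p\<in>F. cpoly_eval p z = 0))))"

text \<open>K[[x_J]] consists of those series whose nonzero coefficients only occur at
exponent vectors supported in J; K[[x_1..x_n]] is K[[x_{0..<n}]] (0-indexed).\<close>

type_synonym 'a mps = "(nat \<Rightarrow> nat) \<Rightarrow> 'a"

definition mps_in :: "nat set \<Rightarrow> 'a::zero mps \<Rightarrow> bool" where
  "mps_in J g \<longleftrightarrow> (\<forall>\<alpha>. g \<alpha> \<noteq> 0 \<longrightarrow> (\<forall>i. i \<notin> J \<longrightarrow> \<alpha> i = 0))"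

definition mps_zero :: "'a::zero mps" where
  "mps_zero = (\<lambda>_. 0)"

definition mps_one :: "'a::{zero,one} mps" where
  "mps_one = (\<lambda>\<alpha>. if \<alpha> = (\<lambda>_. 0) then 1 else 0)"

definition mps_mult :: "'a::comm_ring_1 mps \<Rightarrow> 'a mps \<Rightarrow> 'a mps" where
  "mps_mult f g = (\<lambda>\<alpha>. \<Sum>\<beta>\<in>{\<beta>. \<forall>i. \<beta> i \<le> \<alpha> i}. f \<beta> * g (\<lambda>i. \<alpha> i - \<beta> i))"

definition mps_pow :: "'a::comm_ring_1 mps \<Rightarrow> nat \<Rightarrow> 'a mps" where
  "mps_pow g k = ((mps_mult g) ^^ k) mps_one"

definition mdeg :: "(nat \<Rightarrow> nat) \<Rightarrow> nat" where
  "mdeg \<alpha> = (\<Sum>i\<in>{i. \<alpha> i \<noteq> 0}. \<alpha> i)"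

definition mps_ord :: "'a::zero mps \<Rightarrow> enat" where
  "mps_ord g = (if g = mps_zero then \<infinity>
               else enat (LEAST d. \<exists>\<alpha>. g \<alpha> \<noteq> 0 \<and> mdeg \<alpha> = d))"

definition mps_in_maxpow :: "nat \<Rightarrow> 'a::zero mps \<Rightarrow> bool" where
  "mps_in_maxpow N g \<longleftrightarrow> (\<forall>\<alpha>. g \<alpha> \<noteq> 0 \<longrightarrow> N \<le> mdeg \<alpha>)"

definition ypoly_wf :: "nat \<Rightarrow> nat \<Rightarrow> ((nat \<Rightarrow> nat) \<Rightarrow> 'a::zero mps) \<Rightarrow> bool" where
  "ypoly_wf n m P \<longleftrightarrow> finite {\<gamma>. P \<gamma> \<noteq> mps_zero} \<and>
     (\<forall>\<gamma>. P \<gamma> \<noteq> mps_zero \<longrightarrow> (\<forall>i. m \<le> i \<longrightarrow> \<gamma> i = 0)) \<and>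
     (\<forall>\<gamma>. mps_in {0..<n} (P \<gamma>))"

definition ymonom :: "nat \<Rightarrow> (nat \<Rightarrow> 'a::comm_ring_1 mps) \<Rightarrow> (nat \<Rightarrow> nat) \<Rightarrow> 'a mps" where
  "ymonom m y \<gamma> = foldr (\<lambda>i acc. mps_mult (mps_pow (y i) (\<gamma> i)) acc) [0..<m] mps_one"

definition ypoly_eval :: "nat \<Rightarrow> ((nat \<Rightarrow> nat) \<Rightarrow> 'a::comm_ring_1 mps) \<Rightarrow> (nat \<Rightarrow> 'a mps) \<Rightarrow> 'a mps" where
  "ypoly_eval m P y = (\<lambda>\<alpha>. \<Sum>\<gamma>\<in>{\<gamma>. P \<gamma> \<noteq> mps_zero}. mps_mult (P \<gamma>) (ymonom m y \<gamma>) \<alpha>)"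

end

theory Submission
  imports Defs "HOL-Library.Countable_Set" "HOL-Library.FuncSet"
begin

text \<open>Treat the coefficients of y, together with one auxiliary unknown for each
coefficient of degree c i, as countably many unknowns in K. Then f(y) = 0, ord(y i) \<ge> c i
and the Rabinowitsch-type equation sum w_a y_{i,a} = 1 over the monomials of degree c i form a
countable polynomial system, since each coefficient of f(y) depends polynomially on
finitely many coefficients of y. Every finite subsystem only involves coefficients of
f(y) of degree below some N, so it is solved by any solution of f(y) = 0 mod (x)^N of the
prescribed orders. Hence if such approximate solutions exist for every N, aleph_0-completeness
yields an exact solution; otherwise \<nu>(c) can be taken to be an N for which there is none.\<close>

subsection \<open>Polynomial functions of countably many unknowns\<close>

definition cmonom_eval :: "(nat \<Rightarrow> nat) \<Rightarrow> (nat \<Rightarrow> 'a::comm_ring_1) \<Rightarrow> 'a" where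
  "cmonom_eval \<alpha> z = (\<Prod>i\<in>{i. \<alpha> i \<noteq> 0}. z i ^ \<alpha> i)"

lemma cpoly_eval_superset:
  assumes "finite A" "{\<alpha>. p \<alpha> \<noteq> 0} \<subseteq> A"
  shows "cpoly_eval p z = (\<Sum>\<alpha>\<in>A. p \<alpha> * cmonom_eval \<alpha> z)"
  unfolding cpoly_eval_def cmonom_eval_def
  by (rule sum.mono_neutral_left) (use assms in auto)

lemma cmonom_eval_superset:
  assumes "finite U" "{i. \<alpha> i \<noteq> 0} \<subseteq> U"
  shows "cmonom_eval \<alpha> z = (\<Prod>i\<in>U. z i ^ \<alpha> i)"
  unfolding cmonom_eval_def
  by (rule prod.mono_neutral_left) (use assms in auto)

lemma cmonom_eval_add:
  assumes "finite {i. \<alpha> i \<noteq> 0}" "finite {i. \<beta> i \<noteq> 0}"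
  shows "cmonom_eval (\<lambda>i. \<alpha> i + \<beta> i) z = cmonom_eval \<alpha> z * cmonom_eval \<beta> z"
proof -
  define U where "U = {i. \<alpha> i \<noteq> 0} \<union> {i. \<beta> i \<noteq> 0}"
  have "finite U" using assms by (simp add: U_def)
  then have "cmonom_eval \<gamma> z = (\<Prod>i\<in>U. z i ^ \<gamma> i)" if "{i. \<gamma> i \<noteq> 0} \<subseteq> U" for \<gamma>
    using that by (rule cmonom_eval_superset)
  from this[of \<alpha>] this[of \<beta>] this[of "\<lambda>i. \<alpha> i + \<beta> i"] show ?thesis
    by (auto simp: U_def power_add prod.distrib)
qed

definition cpoly_function :: "((nat \<Rightarrow> 'a::comm_ring_1) \<Rightarrow> 'a) \<Rightarrow> bool" where
  "cpoly_function F \<longleftrightarrow> (\<exists>p. cpoly_wf p \<and> (\<forall>z. cpoly_eval p z = F z))"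

lemma cpoly_function_const: "cpoly_function (\<lambda>z. c)"
proof -
  define p where "p = (\<lambda>\<alpha>::nat\<Rightarrow>nat. if \<alpha> = (\<lambda>_. 0) then c else 0)"
  have supp: "{\<alpha>. p \<alpha> \<noteq> 0} \<subseteq> {\<lambda>_. 0}" by (auto simp: p_def split: if_splits)
  then have "cpoly_wf p" unfolding cpoly_wf_def by (auto intro: finite_subset)
  moreover have "cpoly_eval p z = c" for z
    by (subst cpoly_eval_superset[OF _ supp]) (auto simp: p_def cmonom_eval_def)
  ultimately show ?thesis unfolding cpoly_function_def by blast
qed

lemma cpoly_function_var: "cpoly_function (\<lambda>z. z i)"
proof -
  define e where "e = (\<lambda>j::nat. if j = i then 1::nat else 0)"
  define p where "p = (\<lambda>\<alpha>::nat\<Rightarrow>nat. if \<alpha> = e then 1::'a::comm_ring_1 else 0)"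
  have supp: "{\<alpha>. p \<alpha> \<noteq> 0} \<subseteq> {e}" by (auto simp: p_def split: if_splits)
  have supp_e: "{j. e j \<noteq> 0} = {i}" by (auto simp: e_def)
  have "cpoly_wf p" unfolding cpoly_wf_def using supp supp_e by (auto intro: finite_subset)
  moreover have "cpoly_eval p z = z i" for z
    by (subst cpoly_eval_superset[OF _ supp]) (auto simp: p_def cmonom_eval_def supp_e, simp add: e_def)
  ultimately show ?thesis unfolding cpoly_function_def by blast
qed

lemma cpoly_function_add:
  assumes "cpoly_function F" "cpoly_function G"
  shows "cpoly_function (\<lambda>z. F z + G z)"
proof -
  obtain p where p: "cpoly_wf p" "\<And>z. cpoly_eval p z = F z"
    using assms(1) unfolding cpoly_function_def by blast
  obtain q where q: "cpoly_wf q" "\<And>z. cpoly_eval q z = G z"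
    using assms(2) unfolding cpoly_function_def by blast
  define A where "A = {\<alpha>. p \<alpha> \<noteq> 0} \<union> {\<alpha>. q \<alpha> \<noteq> 0}"
  have "finite A" using p(1) q(1) by (simp add: A_def cpoly_wf_def)
  have supp: "{\<alpha>. p \<alpha> + q \<alpha> \<noteq> 0} \<subseteq> A" by (auto simp: A_def)
  have "cpoly_wf (\<lambda>\<alpha>. p \<alpha> + q \<alpha>)"
    unfolding cpoly_wf_def
  proof (intro conjI allI impI)
    show "finite {\<alpha>. p \<alpha> + q \<alpha> \<noteq> 0}" using supp \<open>finite A\<close> by (rule finite_subset)
    fix \<alpha> assume "p \<alpha> + q \<alpha> \<noteq> 0"
    then have "p \<alpha> \<noteq> 0 \<or> q \<alpha> \<noteq> 0" by auto
    then show "finite {i. \<alpha> i \<noteq> 0}" using p(1) q(1) by (auto simp: cpoly_wf_def)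
  qed
  moreover have "cpoly_eval (\<lambda>\<alpha>. p \<alpha> + q \<alpha>) z = F z + G z" for z
  proof -
    have "cpoly_eval s z = (\<Sum>\<alpha>\<in>A. s \<alpha> * cmonom_eval \<alpha> z)" if "{\<alpha>. s \<alpha> \<noteq> 0} \<subseteq> A" for s
      using \<open>finite A\<close> that by (rule cpoly_eval_superset)
    from this[of p] this[of q] this[of "\<lambda>\<alpha>. p \<alpha> + q \<alpha>"] show ?thesis
      using supp p(2) q(2) by (auto simp: A_def distrib_right sum.distrib)
  qed
  ultimately show ?thesis unfolding cpoly_function_def by blast
qed

definition cpoly_mult :: "((nat \<Rightarrow> nat) \<Rightarrow> 'a::comm_ring_1) \<Rightarrow> ((nat \<Rightarrow> nat) \<Rightarrow> 'a) \<Rightarrow> (nat \<Rightarrow> nat) \<Rightarrow> 'a" where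
  "cpoly_mult p q \<gamma> =
     (\<Sum>x\<in>{x \<in> {\<alpha>. p \<alpha> \<noteq> 0} \<times> {\<beta>. q \<beta> \<noteq> 0}. (\<lambda>i. fst x i + snd x i) = \<gamma>}. p (fst x) * q (snd x))"

context
  fixes p q :: "(nat \<Rightarrow> nat) \<Rightarrow> 'a::comm_ring_1"
  assumes p: "cpoly_wf p" and q: "cpoly_wf q"
begin

private abbreviation (input) "P \<equiv> {\<alpha>. p \<alpha> \<noteq> 0}"
private abbreviation (input) "Q \<equiv> {\<beta>. q \<beta> \<noteq> 0}"
private abbreviation (input) "h \<equiv> \<lambda>x::(nat \<Rightarrow> nat) \<times> (nat \<Rightarrow> nat). (\<lambda>i. fst x i + snd x i)"

private lemma finite_supports: "finite P" "finite Q"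
  using p q by (simp_all add: cpoly_wf_def)

private lemma finite_supp_factors: "x \<in> P \<times> Q \<Longrightarrow> finite {i. fst x i \<noteq> 0} \<and> finite {i. snd x i \<noteq> 0}"
  using p q by (auto simp: cpoly_wf_def)

private lemma cpoly_mult_supp: "{\<gamma>. cpoly_mult p q \<gamma> \<noteq> 0} \<subseteq> h ` (P \<times> Q)"
  unfolding cpoly_mult_def by (auto elim: sum.not_neutral_contains_not_neutral)

lemma cpoly_wf_mult: "cpoly_wf (cpoly_mult p q)"
  unfolding cpoly_wf_def
proof (intro conjI allI impI)
  show "finite {\<gamma>. cpoly_mult p q \<gamma> \<noteq> 0}"
    using cpoly_mult_supp finite_supports by (auto intro: finite_subset)
  fix \<gamma> assume "cpoly_mult p q \<gamma> \<noteq> 0"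
  then obtain x where x: "x \<in> P \<times> Q" "\<gamma> = h x" using cpoly_mult_supp by blast
  have "{i. \<gamma> i \<noteq> 0} \<subseteq> {i. fst x i \<noteq> 0} \<union> {i. snd x i \<noteq> 0}" by (auto simp: x)
  then show "finite {i. \<gamma> i \<noteq> 0}" using finite_supp_factors[OF x(1)] by (auto intro: finite_subset)
qed

lemma cpoly_eval_mult: "cpoly_eval (cpoly_mult p q) z = cpoly_eval p z * cpoly_eval q z"
proof -
  have fin_img: "finite (h ` (P \<times> Q))" using finite_supports by simp
  have "cpoly_eval (cpoly_mult p q) z = (\<Sum>\<gamma>\<in>h ` (P \<times> Q). cpoly_mult p q \<gamma> * cmonom_eval \<gamma> z)"
    by (rule cpoly_eval_superset[OF fin_img cpoly_mult_supp])
  also have "\<dots> = (\<Sum>\<gamma>\<in>h ` (P \<times> Q). \<Sum>x\<in>{x \<in> P \<times> Q. h x = \<gamma>}.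
                            p (fst x) * q (snd x) * cmonom_eval (h x) z)"
    unfolding cpoly_mult_def sum_distrib_right by (intro sum.cong refl) auto
  also have "\<dots> = (\<Sum>x\<in>P \<times> Q. p (fst x) * q (snd x) * cmonom_eval (h x) z)"
    by (rule sum.group[OF _ fin_img]) (use finite_supports in auto)
  also have "\<dots> = (\<Sum>x\<in>P \<times> Q. (p (fst x) * cmonom_eval (fst x) z) * (q (snd x) * cmonom_eval (snd x) z))"
    using finite_supp_factors by (intro sum.cong refl) (simp add: cmonom_eval_add ac_simps)
  also have "\<dots> = (\<Sum>\<alpha>\<in>P. p \<alpha> * cmonom_eval \<alpha> z) * (\<Sum>\<beta>\<in>Q. q \<beta> * cmonom_eval \<beta> z)"
    by (simp add: sum_product sum.cartesian_product case_prod_beta)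
  finally show ?thesis by (simp add: cpoly_eval_def cmonom_eval_def)
qed

end

lemma cpoly_function_mult:
  assumes "cpoly_function F" "cpoly_function G"
  shows "cpoly_function (\<lambda>z. F z * G z)"
proof -
  obtain p where p: "cpoly_wf p" "\<And>z. cpoly_eval p z = F z"
    using assms(1) unfolding cpoly_function_def by blast
  obtain q where q: "cpoly_wf q" "\<And>z. cpoly_eval q z = G z"
    using assms(2) unfolding cpoly_function_def by blast
  show ?thesis
    unfolding cpoly_function_def using cpoly_wf_mult cpoly_eval_mult p q by metis
qed

lemma cpoly_function_sum:
  assumes "\<And>x. x \<in> A \<Longrightarrow> cpoly_function (F x)"
  shows "cpoly_function (\<lambda>z. \<Sum>x\<in>A. F x z)"
  using assms
proof (induction A rule: infinite_finite_induct)
  case (insert a A)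
  then have "cpoly_function (\<lambda>z. F a z + (\<Sum>x\<in>A. F x z))" by (intro cpoly_function_add) auto
  with insert show ?case by simp
qed (simp_all add: cpoly_function_const)

lemma cpoly_function_diff:
  assumes "cpoly_function F" "cpoly_function G"
  shows "cpoly_function (\<lambda>z. F z - G z)"
proof -
  have "cpoly_function (\<lambda>z. F z + (-1) * G z)"
    by (intro cpoly_function_add cpoly_function_mult assms cpoly_function_const)
  then show ?thesis by simp
qed

subsection \<open>Series whose coefficients are polynomial in the unknowns\<close>

definition cpoly_series :: "((nat \<Rightarrow> 'a::comm_ring_1) \<Rightarrow> 'a mps) \<Rightarrow> bool" where
  "cpoly_series A \<longleftrightarrow> (\<forall>\<alpha>. cpoly_function (\<lambda>z. A z \<alpha>))"

lemma cpoly_series_const: "cpoly_series (\<lambda>z. g)"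
  unfolding cpoly_series_def by (simp add: cpoly_function_const)

lemma cpoly_series_mult:
  assumes "cpoly_series A" "cpoly_series B"
  shows "cpoly_series (\<lambda>z. mps_mult (A z) (B z))"
  using assms unfolding cpoly_series_def mps_mult_def
  by (auto intro!: cpoly_function_sum cpoly_function_mult)

lemma cpoly_series_pow:
  assumes "cpoly_series A"
  shows "cpoly_series (\<lambda>z. mps_pow (A z) k)"
  by (induction k) (simp_all add: mps_pow_def cpoly_series_const cpoly_series_mult assms)

lemma cpoly_series_ymonom:
  assumes "\<And>i. cpoly_series (\<lambda>z. y z i)"
  shows "cpoly_series (\<lambda>z. ymonom m (y z) \<gamma>)"
proof -
  have "cpoly_series (\<lambda>z. foldr (\<lambda>i acc. mps_mult (mps_pow (y z i) (\<gamma> i)) acc) xs mps_one)" for xs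
    by (induction xs) (simp_all add: cpoly_series_const cpoly_series_mult cpoly_series_pow assms)
  then show ?thesis unfolding ymonom_def .
qed

lemma cpoly_series_ypoly_eval:
  assumes "\<And>i. cpoly_series (\<lambda>z. y z i)"
  shows "cpoly_series (\<lambda>z. ypoly_eval m P (y z))"
  unfolding cpoly_series_def ypoly_eval_def
  using cpoly_series_mult[OF cpoly_series_const cpoly_series_ymonom[OF assms]]
  by (auto simp: cpoly_series_def intro!: cpoly_function_sum)

definition fin_supp :: "(nat \<Rightarrow> nat) set" where
  "fin_supp = {\<alpha>. finite {i. \<alpha> i \<noteq> 0}}"

lemma countable_fin_supp: "countable fin_supp"
proof -
  define of_list where "of_list xs = (\<lambda>i. if i < length xs then xs ! i else 0)" for xs :: "nat list"
  have "\<alpha> = of_list (map \<alpha> [0..<b])" if "{i. \<alpha> i \<noteq> 0} \<subseteq> {..<b}" for \<alpha> b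
    using that by (auto simp: of_list_def fun_eq_iff)
  then have "fin_supp \<subseteq> range of_list"
    unfolding fin_supp_def by (blast dest: finite_nat_bounded)
  then show ?thesis by (rule countable_subset) simp
qed

lemma infinite_exps_below:
  assumes "\<alpha> \<notin> fin_supp"
  shows "infinite {\<beta>. \<forall>i. \<beta> i \<le> \<alpha> i}"
proof
  assume fin: "finite {\<beta>. \<forall>i. \<beta> i \<le> \<alpha> i}"
  define single where "single i = (\<lambda>j. if j = i then \<alpha> i else 0)" for i
  have "inj_on single {i. \<alpha> i \<noteq> 0}"
  proof (rule inj_onI)
    fix a b assume "a \<in> {i. \<alpha> i \<noteq> 0}" "single a = single b"
    then have "single b a \<noteq> 0" by (metis (mono_tags) mem_Collect_eq single_def)
    then show "a = b" by (simp add: single_def split: if_splits)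
  qed
  moreover have "single ` {i. \<alpha> i \<noteq> 0} \<subseteq> {\<beta>. \<forall>i. \<beta> i \<le> \<alpha> i}"
    by (auto simp: single_def)
  then have "finite (single ` {i. \<alpha> i \<noteq> 0})" using fin by (rule finite_subset)
  ultimately have "finite {i. \<alpha> i \<noteq> 0}" using finite_imageD by blast
  with assms show False by (simp add: fin_supp_def)
qed

text \<open>Coefficients at exponent vectors of infinite support are junk: products and polynomial
  evaluations vanish there, being sums over infinite sets.\<close>

lemma mps_mult_notin_fin_supp: "\<alpha> \<notin> fin_supp \<Longrightarrow> mps_mult g h \<alpha> = 0"
  unfolding mps_mult_def using infinite_exps_below by simp

lemma ypoly_eval_notin_fin_supp: "\<alpha> \<notin> fin_supp \<Longrightarrow> ypoly_eval m P y \<alpha> = 0"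
  unfolding ypoly_eval_def by (simp add: mps_mult_notin_fin_supp)

lemma le_mdeg: "\<alpha> \<in> fin_supp \<Longrightarrow> \<alpha> j \<le> mdeg \<alpha>"
  unfolding mdeg_def fin_supp_def
  by (cases "\<alpha> j = 0") (auto intro: member_le_sum)

lemma finite_exps_mdeg_eq:
  assumes "finite J"
  shows "finite {\<alpha>. {i. \<alpha> i \<noteq> 0} \<subseteq> J \<and> mdeg \<alpha> = d}"
proof -
  define ext where "ext g = (\<lambda>i. if i \<in> J then g i else 0)" for g :: "nat \<Rightarrow> nat"
  have "\<alpha> \<in> ext ` PiE J (\<lambda>_. {..d})" if "{i. \<alpha> i \<noteq> 0} \<subseteq> J" "mdeg \<alpha> = d" for \<alpha>
  proof
    show "\<alpha> = ext (restrict \<alpha> J)" using that(1) by (auto simp: ext_def fun_eq_iff)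
    have "\<alpha> \<in> fin_supp" using that(1) assms by (auto simp: fin_supp_def intro: finite_subset)
    then have "\<alpha> i \<le> d" for i using le_mdeg that(2) by blast
    then show "restrict \<alpha> J \<in> PiE J (\<lambda>_. {..d})" by (simp add: restrict_PiE_iff)
  qed
  then have "{\<alpha>. {i. \<alpha> i \<noteq> 0} \<subseteq> J \<and> mdeg \<alpha> = d} \<subseteq> ext ` PiE J (\<lambda>_. {..d})" by blast
  moreover have "finite (ext ` PiE J (\<lambda>_. {..d}))" using assms by (simp add: finite_PiE)
  ultimately show ?thesis by (rule finite_subset)
qed

lemma mps_in_supp_subset: "mps_in J g \<Longrightarrow> g \<alpha> \<noteq> 0 \<Longrightarrow> {i. \<alpha> i \<noteq> 0} \<subseteq> J"
  unfolding mps_in_def subset_iff mem_Collect_eq by metis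

lemma mps_ord_eq_enat_iff:
  "mps_ord g = enat d \<longleftrightarrow> (\<exists>\<alpha>. g \<alpha> \<noteq> 0 \<and> mdeg \<alpha> = d) \<and> (\<forall>\<alpha>. g \<alpha> \<noteq> 0 \<longrightarrow> d \<le> mdeg \<alpha>)"
proof (cases "g = mps_zero")
  case False
  then have ex: "\<exists>d \<alpha>. g \<alpha> \<noteq> 0 \<and> mdeg \<alpha> = d" by (auto simp: mps_zero_def)
  have "(LEAST d. \<exists>\<alpha>. g \<alpha> \<noteq> 0 \<and> mdeg \<alpha> = d) = d \<longleftrightarrow>
        (\<exists>\<alpha>. g \<alpha> \<noteq> 0 \<and> mdeg \<alpha> = d) \<and> (\<forall>\<alpha>. g \<alpha> \<noteq> 0 \<longrightarrow> d \<le> mdeg \<alpha>)"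
    using LeastI_ex[OF ex] by (auto intro!: Least_equality Least_le)
  with False show ?thesis by (simp add: mps_ord_def)
qed (simp add: mps_ord_def mps_zero_def)

lemma ypoly_eval_cong:
  assumes "\<And>i. i < m \<Longrightarrow> y i = y' i"
  shows "ypoly_eval m P y = ypoly_eval m P y'"
proof -
  have "ymonom m y = ymonom m y'"
    unfolding ymonom_def using assms by (intro ext foldr_cong) auto
  then show ?thesis unfolding ypoly_eval_def by simp
qed

lemma aleph0_complete_common_zero:
  fixes E :: "((nat \<Rightarrow> 'a::field) \<Rightarrow> 'a) set"
  assumes "aleph0_complete TYPE('a)" "countable E" "\<And>G. G \<in> E \<Longrightarrow> cpoly_function G"
    and "\<And>F. F \<subseteq> E \<Longrightarrow> finite F \<Longrightarrow> \<exists>z. \<forall>G\<in>F. G z = 0"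
  shows "\<exists>z. \<forall>G\<in>E. G z = 0"
proof -
  define poly where "poly G = (SOME p. cpoly_wf p \<and> (\<forall>z. cpoly_eval p z = G z))"
    for G :: "(nat \<Rightarrow> 'a) \<Rightarrow> 'a"
  have poly: "cpoly_wf (poly G)" "cpoly_eval (poly G) z = G z" if "G \<in> E" for G z
    using someI_ex[OF assms(3)[OF that, unfolded cpoly_function_def]] by (auto simp: poly_def)
  have finite_subsystems: "\<exists>z. \<forall>p\<in>F. cpoly_eval p z = 0" if F: "F \<subseteq> poly ` E" "finite F" for F
  proof -
    obtain F' where F': "F' \<subseteq> E" "finite F'" "F = poly ` F'"
      using finite_subset_image[OF F(2,1)] by blast
    then obtain z where "\<forall>G\<in>F'. G z = 0" using assms(4) by blast
    with F' have "\<forall>p\<in>F. cpoly_eval p z = 0" by (auto simp: poly(2))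
    then show ?thesis by blast
  qed
  have "countable (poly ` E) \<and> (\<forall>p\<in>poly ` E. cpoly_wf p)"
    using assms(2) poly(1) by auto
  from assms(1)[unfolded aleph0_complete_def, rule_format, OF this] finite_subsystems
  obtain z where "\<forall>p\<in>poly ` E. cpoly_eval p z = 0" by blast
  with poly(2) show ?thesis by auto
qed


lemma finite_subset_UN_mono:
  fixes S :: "nat \<Rightarrow> 'b set"
  assumes "mono S" "finite F" "F \<subseteq> (\<Union>N. S N)"
  shows "\<exists>N. F \<subseteq> S N"
  using assms(2,3)
proof (induction F rule: finite_induct)
  case (insert x F)
  then obtain N N' where "x \<in> S N" "F \<subseteq> S N'" by blast
  then have "insert x F \<subseteq> S (max N N')"
    using monoD[OF assms(1), of N "max N N'"] monoD[OF assms(1), of N' "max N N'"] by auto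
  then show ?case ..
qed simp

subsection \<open>Solutions of prescribed orders as common zeros of a countable system\<close>

locale approx_system =
  fixes m r :: nat
    and f :: "nat \<Rightarrow> (nat \<Rightarrow> nat) \<Rightarrow> 'a::field mps"
    and J :: "nat \<Rightarrow> nat set"
    and c :: "nat \<Rightarrow> nat"
  assumes finite_J: "i < m \<Longrightarrow> finite (J i)"
begin

definition approx_solution :: "nat \<Rightarrow> (nat \<Rightarrow> 'a mps) \<Rightarrow> bool" where
  "approx_solution N y \<longleftrightarrow>
     (\<forall>i<m. mps_in (J i) (y i) \<and> mps_ord (y i) = enat (c i)) \<and>
     (\<forall>k<r. mps_in_maxpow N (ypoly_eval m (f k) y))"

text \<open>The unknown indexed by (False, i, \<alpha>) is the \<alpha>-coefficient of y i; the one indexed by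
  (True, i, \<alpha>) multiplies it in lead_eq i, which forces ord (y i) \<le> c i.\<close>

definition unknowns :: "(bool \<times> nat \<times> (nat \<Rightarrow> nat)) set" where
  "unknowns = UNIV \<times> UNIV \<times> fin_supp"

definition var :: "bool \<times> nat \<times> (nat \<Rightarrow> nat) \<Rightarrow> nat" where
  "var = to_nat_on unknowns"

definition series :: "(nat \<Rightarrow> 'a) \<Rightarrow> nat \<Rightarrow> 'a mps" where
  "series z i \<alpha> = (if i < m \<and> {j. \<alpha> j \<noteq> 0} \<subseteq> J i then z (var (False, i, \<alpha>)) else 0)"

definition exps_of_deg :: "nat \<Rightarrow> nat \<Rightarrow> (nat \<Rightarrow> nat) set" where
  "exps_of_deg i d = {\<alpha>. {j. \<alpha> j \<noteq> 0} \<subseteq> J i \<and> mdeg \<alpha> = d}"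

definition lead_eq :: "nat \<Rightarrow> (nat \<Rightarrow> 'a) \<Rightarrow> 'a" where
  "lead_eq i z = (\<Sum>\<alpha>\<in>exps_of_deg i (c i). z (var (True, i, \<alpha>)) * series z i \<alpha>) - 1"

definition system :: "nat \<Rightarrow> ((nat \<Rightarrow> 'a) \<Rightarrow> 'a) set" where
  "system N =
     (\<lambda>(k, \<alpha>) z. ypoly_eval m (f k) (series z) \<alpha>) ` ({..<r} \<times> {\<alpha> \<in> fin_supp. mdeg \<alpha> < N}) \<union>
     (\<lambda>(i, \<alpha>) z. series z i \<alpha>) ` {(i, \<alpha>). i < m \<and> {j. \<alpha> j \<noteq> 0} \<subseteq> J i \<and> mdeg \<alpha> < c i} \<union>
     lead_eq ` {..<m}"

lemma system_memE:
  assumes "G \<in> system N"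
  obtains (coeff) k \<alpha> where "k < r" "\<alpha> \<in> fin_supp" "mdeg \<alpha> < N"
      "G = (\<lambda>z. ypoly_eval m (f k) (series z) \<alpha>)"
    | (low) i \<alpha> where "i < m" "{j. \<alpha> j \<noteq> 0} \<subseteq> J i" "mdeg \<alpha> < c i" "G = (\<lambda>z. series z i \<alpha>)"
    | (lead) i where "i < m" "G = lead_eq i"
proof -
  from assms consider
      (1) "G \<in> (\<lambda>(k, \<alpha>) z. ypoly_eval m (f k) (series z) \<alpha>) ` ({..<r} \<times> {\<alpha> \<in> fin_supp. mdeg \<alpha> < N})"
    | (2) "G \<in> (\<lambda>(i, \<alpha>) z. series z i \<alpha>) ` {(i, \<alpha>). i < m \<and> {j. \<alpha> j \<noteq> 0} \<subseteq> J i \<and> mdeg \<alpha> < c i}"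
    | (3) "G \<in> lead_eq ` {..<m}"
    unfolding system_def by blast
  then show ?thesis
  proof cases
    case 1
    then obtain k \<alpha> where "k < r" "\<alpha> \<in> fin_supp" "mdeg \<alpha> < N"
      "G = (\<lambda>z. ypoly_eval m (f k) (series z) \<alpha>)" by auto
    then show ?thesis by (rule coeff)
  next
    case 2
    then obtain i \<alpha> where "i < m" "{j. \<alpha> j \<noteq> 0} \<subseteq> J i" "mdeg \<alpha> < c i"
      "G = (\<lambda>z. series z i \<alpha>)" by auto
    then show ?thesis by (rule low)
  next
    case 3
    then show ?thesis using lead by blast
  qed
qed

lemma coeff_eq_mem_system:
  "k < r \<Longrightarrow> \<alpha> \<in> fin_supp \<Longrightarrow> mdeg \<alpha> < N \<Longrightarrow> (\<lambda>z. ypoly_eval m (f k) (series z) \<alpha>) \<in> system N"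
  unfolding system_def by (intro UnI1 image_eqI[where x = "(k, \<alpha>)"]) auto

lemma low_eq_mem_system:
  "i < m \<Longrightarrow> {j. \<alpha> j \<noteq> 0} \<subseteq> J i \<Longrightarrow> mdeg \<alpha> < c i \<Longrightarrow> (\<lambda>z. series z i \<alpha>) \<in> system N"
  unfolding system_def by (intro UnI1 UnI2 image_eqI[where x = "(i, \<alpha>)"]) auto

lemma lead_eq_mem_system: "i < m \<Longrightarrow> lead_eq i \<in> system N"
  unfolding system_def by (intro UnI2 image_eqI[where x = i]) auto

lemma mono_system: "mono system"
proof (rule monoI)
  fix N N' :: nat assume "N \<le> N'"
  then have "{\<alpha> \<in> fin_supp. mdeg \<alpha> < N} \<subseteq> {\<alpha> \<in> fin_supp. mdeg \<alpha> < N'}" by auto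
  then show "system N \<subseteq> system N'"
    unfolding system_def by (intro Un_mono image_mono Sigma_mono order_refl)
qed

lemma fin_supp_memI: "i < m \<Longrightarrow> {j. \<alpha> j \<noteq> 0} \<subseteq> J i \<Longrightarrow> \<alpha> \<in> fin_supp"
  unfolding fin_supp_def using finite_J by (blast intro: finite_subset)

lemma countable_system: "countable (system N)"
proof -
  have exps: "countable (UNIV \<times> fin_supp :: (nat \<times> (nat \<Rightarrow> nat)) set)"
    using countable_fin_supp by simp
  have "countable ({..<r} \<times> {\<alpha> \<in> fin_supp. mdeg \<alpha> < N})"
    by (rule countable_subset[OF _ exps]) blast
  moreover have "countable {(i, \<alpha>). i < m \<and> {j. \<alpha> j \<noteq> 0} \<subseteq> J i \<and> mdeg \<alpha> < c i}"
    by (rule countable_subset[OF _ exps]) (use fin_supp_memI in blast)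
  ultimately show ?thesis
    unfolding system_def by (intro countable_Un countable_image) simp_all
qed

lemma cpoly_series_series: "cpoly_series (\<lambda>z. series z i)"
proof -
  have "cpoly_function (\<lambda>z. if P then z v else 0)" for P v
    by (cases P) (simp_all add: cpoly_function_var cpoly_function_const)
  then show ?thesis unfolding cpoly_series_def series_def by blast
qed

lemma cpoly_function_system:
  assumes "G \<in> system N"
  shows "cpoly_function G"
proof -
  have coeffs: "cpoly_function (\<lambda>z. series z i \<alpha>)" for i \<alpha>
    using cpoly_series_series by (simp add: cpoly_series_def)
  from assms show ?thesis
  proof (cases rule: system_memE)
    case coeff
    then show ?thesis
      using cpoly_series_ypoly_eval[OF cpoly_series_series] by (simp add: cpoly_series_def)
  next
    case low
    then show ?thesis by (simp add: coeffs)
  next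
    case lead
    then show ?thesis unfolding lead_eq_def
      by (simp add: coeffs cpoly_function_diff cpoly_function_sum cpoly_function_mult
                    cpoly_function_var cpoly_function_const)
  qed
qed

lemma finite_exps_of_deg: "i < m \<Longrightarrow> finite (exps_of_deg i d)"
  unfolding exps_of_deg_def using finite_J by (rule finite_exps_mdeg_eq)

lemma unknowns_memI: "i < m \<Longrightarrow> {j. \<alpha> j \<noteq> 0} \<subseteq> J i \<Longrightarrow> (b, i, \<alpha>) \<in> unknowns"
  by (simp add: unknowns_def fin_supp_memI)

lemma series_eq_var: "i < m \<Longrightarrow> {j. \<alpha> j \<noteq> 0} \<subseteq> J i \<Longrightarrow> series z i \<alpha> = z (var (False, i, \<alpha>))"
  unfolding series_def by (intro if_P conjI)

lemma series_nonzero_imp: "series z i \<alpha> \<noteq> 0 \<Longrightarrow> i < m \<and> {j. \<alpha> j \<noteq> 0} \<subseteq> J i"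
  unfolding series_def by (metis (full_types))

lemma common_zero_of_approx_solution:
  assumes "approx_solution N y"
  shows "\<exists>z. \<forall>G\<in>system N. G z = 0"
proof -
  have y: "mps_in (J i) (y i)" "mps_ord (y i) = enat (c i)" if "i < m" for i
    using assms that by (auto simp: approx_solution_def)
  define lead_exp where "lead_exp i = (SOME \<alpha>. y i \<alpha> \<noteq> 0 \<and> mdeg \<alpha> = c i)" for i
  have lead_exp: "y i (lead_exp i) \<noteq> 0 \<and> mdeg (lead_exp i) = c i" if "i < m" for i
  proof -
    have "\<exists>\<alpha>. y i \<alpha> \<noteq> 0 \<and> mdeg \<alpha> = c i"
      using y(2)[OF that] by (simp add: mps_ord_eq_enat_iff)
    then show ?thesis unfolding lead_exp_def by (rule someI_ex)
  qed
  define w where "w b i \<alpha> = (if b then if \<alpha> = lead_exp i then inverse (y i \<alpha>) else 0 else y i \<alpha>)"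
    for b i \<alpha>
  define z where "z j = (case from_nat_into unknowns j of (b, i, \<alpha>) \<Rightarrow> w b i \<alpha>)" for j
  have z_var: "z (var (b, i, \<alpha>)) = w b i \<alpha>" if "(b, i, \<alpha>) \<in> unknowns" for b i \<alpha>
  proof -
    have "countable unknowns" using countable_fin_supp by (simp add: unknowns_def)
    with that show ?thesis by (simp add: z_def var_def)
  qed
  have series_z: "series z i = y i" if "i < m" for i
  proof
    fix \<alpha>
    show "series z i \<alpha> = y i \<alpha>"
    proof (cases "{j. \<alpha> j \<noteq> 0} \<subseteq> J i")
      case True
      then show ?thesis
        using series_eq_var[OF that True] z_var[OF unknowns_memI[OF that True]] by (simp add: w_def)
    next
      case False
      then have "series z i \<alpha> = 0"
        by (rule contrapos_np) (rule conjunct2[OF series_nonzero_imp])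
      moreover have "y i \<alpha> = 0"
        using False by (rule contrapos_np) (rule mps_in_supp_subset[OF y(1)[OF that]])
      ultimately show ?thesis by simp
    qed
  qed
  have "G z = 0" if "G \<in> system N" for G
    using that
  proof (cases rule: system_memE)
    case (coeff k \<alpha>)
    have "\<forall>\<beta>. ypoly_eval m (f k) y \<beta> \<noteq> 0 \<longrightarrow> N \<le> mdeg \<beta>"
      using assms \<open>k < r\<close> by (simp add: approx_solution_def mps_in_maxpow_def)
    then have "ypoly_eval m (f k) y \<alpha> = 0"
      using \<open>mdeg \<alpha> < N\<close> by (meson not_le)
    with coeff show ?thesis by (simp add: ypoly_eval_cong[OF series_z])
  next
    case (low i \<alpha>)
    have "\<forall>\<beta>. y i \<beta> \<noteq> 0 \<longrightarrow> c i \<le> mdeg \<beta>"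
      using y(2)[OF \<open>i < m\<close>] by (simp add: mps_ord_eq_enat_iff)
    then have "y i \<alpha> = 0" using \<open>mdeg \<alpha> < c i\<close> by (meson not_le)
    with low show ?thesis by (simp add: series_z)
  next
    case (lead i)
    have "lead_exp i \<in> exps_of_deg i (c i)"
      using lead_exp[OF \<open>i < m\<close>] mps_in_supp_subset[OF y(1)[OF \<open>i < m\<close>]]
      by (simp add: exps_of_deg_def)
    moreover have "z (var (True, i, \<alpha>)) * series z i \<alpha> =
                     (if \<alpha> = lead_exp i then inverse (y i \<alpha>) * y i \<alpha> else 0)"
      if "\<alpha> \<in> exps_of_deg i (c i)" for \<alpha>
    proof -
      have "(True, i, \<alpha>) \<in> unknowns"
        using that \<open>i < m\<close> by (intro unknowns_memI) (simp_all add: exps_of_deg_def)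
      then show ?thesis using \<open>i < m\<close> by (simp add: z_var w_def series_z)
    qed
    ultimately show ?thesis
      using lead lead_exp finite_exps_of_deg by (simp add: lead_eq_def sum.delta)
  qed
  then show ?thesis by blast
qed

lemma mps_ord_series:
  assumes zero: "\<And>G N. G \<in> system N \<Longrightarrow> G z = 0" and "i < m"
  shows "mps_ord (series z i) = enat (c i)"
proof -
  have "c i \<le> mdeg \<alpha>" if "series z i \<alpha> \<noteq> 0" for \<alpha>
  proof (rule ccontr)
    assume "\<not> c i \<le> mdeg \<alpha>"
    then have "(\<lambda>z. series z i \<alpha>) \<in> system 0"
      using series_nonzero_imp[OF that] by (simp add: low_eq_mem_system)
    with that show False using zero[of "\<lambda>z. series z i \<alpha>"] by simp
  qed
  moreover have "\<exists>\<alpha>\<in>exps_of_deg i (c i). series z i \<alpha> \<noteq> 0"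
  proof (rule ccontr)
    assume "\<not> (\<exists>\<alpha>\<in>exps_of_deg i (c i). series z i \<alpha> \<noteq> 0)"
    then have "(\<Sum>\<alpha>\<in>exps_of_deg i (c i). z (var (True, i, \<alpha>)) * series z i \<alpha>) = 0"
      by simp
    with zero[OF lead_eq_mem_system[OF \<open>i < m\<close>, of 0]] show False by (simp add: lead_eq_def)
  qed
  ultimately show ?thesis
    unfolding mps_ord_eq_enat_iff exps_of_deg_def by blast
qed

lemma ypoly_eval_series_eq_zero:
  assumes zero: "\<And>G N. G \<in> system N \<Longrightarrow> G z = 0" and "k < r"
  shows "ypoly_eval m (f k) (series z) = mps_zero"
proof
  fix \<alpha>
  show "ypoly_eval m (f k) (series z) \<alpha> = mps_zero \<alpha>"
  proof (cases "\<alpha> \<in> fin_supp")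
    case True
    with \<open>k < r\<close> have "(\<lambda>z. ypoly_eval m (f k) (series z) \<alpha>) \<in> system (Suc (mdeg \<alpha>))"
      by (simp add: coeff_eq_mem_system)
    then show ?thesis using zero by (simp add: mps_zero_def)
  qed (simp add: ypoly_eval_notin_fin_supp mps_zero_def)
qed

theorem exact_solution_of_approx_solutions:
  assumes "aleph0_complete TYPE('a)" "\<And>N. \<exists>y. approx_solution N y"
  shows "\<exists>y. (\<forall>i<m. mps_in (J i) (y i) \<and> mps_ord (y i) = enat (c i)) \<and>
             (\<forall>k<r. ypoly_eval m (f k) y = mps_zero)"
proof -
  have "\<exists>z. \<forall>G\<in>(\<Union>N. system N). G z = 0"
  proof (rule aleph0_complete_common_zero[OF assms(1)])
    show "countable (\<Union>N. system N)" by (simp add: countable_system)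
    show "cpoly_function G" if "G \<in> (\<Union>N. system N)" for G
      using that cpoly_function_system by blast
    fix F assume "F \<subseteq> (\<Union>N. system N)" "finite F"
    then obtain N where "F \<subseteq> system N"
      using finite_subset_UN_mono[OF mono_system] by blast
    moreover obtain y where "approx_solution N y" using assms(2) by blast
    ultimately show "\<exists>z. \<forall>G\<in>F. G z = 0"
      using common_zero_of_approx_solution by blast
  qed
  then obtain z where "\<forall>G\<in>(\<Union>N. system N). G z = 0" ..
  then have "G z = 0" if "G \<in> system N" for G N
    using that by blast
  then show ?thesis
    using mps_ord_series ypoly_eval_series_eq_zero
    by (intro exI[of _ "series z"]) (auto simp: mps_in_def series_def)
qed

end

text \<open>When every N admits an approximate solution of orders c, the value \<nu> c is junk and the
  exact solution comes from compactness.\<close>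

theorem corollary3p7:
  fixes n m r :: nat
    and f :: "nat \<Rightarrow> (nat \<Rightarrow> nat) \<Rightarrow> 'a::field mps"
    and J :: "nat \<Rightarrow> nat set"
  assumes "aleph0_complete TYPE('a)"
    and "\<forall>k<r. ypoly_wf n m (f k)"
    and "\<forall>i<m. J i \<subseteq> {0..<n}"
  shows "\<exists>\<nu> :: (nat \<Rightarrow> nat) \<Rightarrow> nat. \<forall>c y'.
           (\<forall>i. m \<le> i \<longrightarrow> c i = 0) \<and>
           (\<forall>i<m. mps_in (J i) (y' i) \<and> mps_ord (y' i) = enat (c i)) \<and>
           (\<forall>k<r. mps_in_maxpow (\<nu> c) (ypoly_eval m (f k) y'))
           \<longrightarrow> (\<exists>y. (\<forall>i<m. mps_in (J i) (y i) \<and> mps_ord (y i) = enat (c i)) \<and>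
                    (\<forall>k<r. ypoly_eval m (f k) y = mps_zero))"
proof -
  have system: "approx_system m J"
    using assms(3) by unfold_locales (meson finite_atLeastLessThan finite_subset)
  define approx where "approx c N = (\<exists>y. approx_system.approx_solution m r f J c N y)" for c N
  define \<nu> where "\<nu> c = (SOME N. \<not> approx c N)" for c
  have "\<exists>y. (\<forall>i<m. mps_in (J i) (y i) \<and> mps_ord (y i) = enat (c i)) \<and>
            (\<forall>k<r. ypoly_eval m (f k) y = mps_zero)"
    if "approx c (\<nu> c)" for c
  proof (cases "\<forall>N. approx c N")
    case True
    then show ?thesis
      using approx_system.exact_solution_of_approx_solutions[OF system assms(1)]
      unfolding approx_def by blast
  next
    case False
    then have "\<not> approx c (\<nu> c)" unfolding \<nu>_def by (metis someI_ex)
    with that show ?thesis by blast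
  qed
  then show ?thesis
    by (intro exI[of _ \<nu>]) (auto simp: approx_def approx_system.approx_solution_def[OF system])
qed

end
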